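(* Let $\mathcal{P}'$ be a $(K',F',Z',S')$-PDA and write $g'=F'-Z'$. Let $m$ be a positive integer divisible by $6$. Then there exists a $(K,F,Z,S)$-PDA with $K=mK'$, $F=mF'$, $Z=mF'-3g'$ and $S=8S'$.
   Context: A $(K,F,Z,S)$-PDA (placement delivery array) is an $F\times K$ array whose entries are either the symbol $*$ or integers from $\{1,\dots,S\}$, each integer of $\{1,\dots,S\}$ appearing at least once, such that: (A) each column contains exactly $Z$ entries equal to $*$; (B) no integer appears more than once in any row or any column; (C) whenever $p_{j_1,k_1}=p_{j_2,k_2}=s$ is an integer with $j_1\ne j_2$ and $k_1\ne k_2$, then $p_{j_1,k_2}=p_{j_2,k_1}=*$. *)

theory Defs
  imports Main
begin

text \<open>An F x K array with rows indexed by j < F and columns by k < K.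
  The entry at (j,k) is None for the symbol * and Some s for an integer s.\<close>

definition is_pda :: "nat \<Rightarrow> nat \<Rightarrow> nat \<Rightarrow> nat \<Rightarrow> (nat \<Rightarrow> nat \<Rightarrow> nat option) \<Rightarrow> bool" where
  "is_pda K F Z S P \<longleftrightarrow>
     (\<forall>j<F. \<forall>k<K. \<forall>s. P j k = Some s \<longrightarrow> s \<in> {1..S}) \<and>
     (\<forall>s\<in>{1..S}. \<exists>j<F. \<exists>k<K. P j k = Some s) \<and>
     (\<forall>k<K. card {j. j < F \<and> P j k = None} = Z) \<and>
     (\<forall>j<F. \<forall>k1<K. \<forall>k2<K. \<forall>s. k1 \<noteq> k2 \<and> P j k1 = Some s \<longrightarrow> P j k2 \<noteq> Some s) \<and>
     (\<forall>k<K. \<forall>j1<F. \<forall>j2<F. \<forall>s. j1 \<noteq> j2 \<and> P j1 k = Some s \<longrightarrow> P j2 k \<noteq> Some s) \<and>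
     (\<forall>j1<F. \<forall>j2<F. \<forall>k1<K. \<forall>k2<K. \<forall>s.
        j1 \<noteq> j2 \<and> k1 \<noteq> k2 \<and> P j1 k1 = Some s \<and> P j2 k2 = Some s
        \<longrightarrow> P j1 k2 = None \<and> P j2 k1 = None)"

end

theory Submission
  imports Defs
begin

text \<open>The Kronecker product of an \<open>(K\<^sub>1,F\<^sub>1,Z\<^sub>1,S\<^sub>1)\<close>-PDA and a \<open>(K\<^sub>2,F\<^sub>2,Z\<^sub>2,S\<^sub>2)\<close>-PDA,
  in which a cell carries the pair of the symbols of its two factor cells and is a star as soon as
  one of them is, is a \<open>(K\<^sub>1K\<^sub>2, F\<^sub>1F\<^sub>2, F\<^sub>1F\<^sub>2 - g\<^sub>1g\<^sub>2, S\<^sub>1S\<^sub>2)\<close>-PDA with \<open>g\<^sub>i = F\<^sub>i - Z\<^sub>i\<close>: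
  a column of the product has exactly \<open>g\<^sub>1g\<^sub>2\<close> integer entries. The theorem follows by taking
  the product of an explicit \<open>(6,6,3,8)\<close>-PDA, the \<open>(t,t,t-1,1)\<close>-PDA carrying its single symbol on
  the diagonal, and the given PDA, where \<open>m = 6t\<close>.\<close>

lemma is_pdaI:
  assumes "\<And>j k s. j < F \<Longrightarrow> k < K \<Longrightarrow> P j k = Some s \<Longrightarrow> s \<in> {1..S}"
    and "\<And>s. s \<in> {1..S} \<Longrightarrow> \<exists>j<F. \<exists>k<K. P j k = Some s"
    and "\<And>k. k < K \<Longrightarrow> card {j. j < F \<and> P j k = None} = Z"
    and "\<And>j1 j2 k1 k2 s. j1 < F \<Longrightarrow> j2 < F \<Longrightarrow> k1 < K \<Longrightarrow> k2 < K \<Longrightarrow>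
           P j1 k1 = Some s \<Longrightarrow> P j2 k2 = Some s \<Longrightarrow>
           (j1 = j2 \<and> k1 = k2) \<or> (P j1 k2 = None \<and> P j2 k1 = None)"
  shows "is_pda K F Z S P"
  unfolding is_pda_def
proof (intro conjI allI impI ballI notI)
  fix j k1 k2 s
  assume "j < F" "k1 < K" "k2 < K" "k1 \<noteq> k2 \<and> P j k1 = Some s" "P j k2 = Some s"
  then show False using assms(4)[of j j k1 k2 s] by auto
next
  fix k j1 j2 s
  assume "k < K" "j1 < F" "j2 < F" "j1 \<noteq> j2 \<and> P j1 k = Some s" "P j2 k = Some s"
  then show False using assms(4)[of j1 j2 k k s] by auto
qed (use assms in blast)+

lemma pda_symbol_range:
  assumes "is_pda K F Z S P" "j < F" "k < K" "P j k = Some s"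
  shows "s \<in> {1..S}"
  using assms(1)[unfolded is_pda_def, THEN conjunct1] assms(2-4) by blast

lemma pda_symbol_occurs:
  assumes "is_pda K F Z S P" "s \<in> {1..S}"
  shows "\<exists>j<F. \<exists>k<K. P j k = Some s"
  using assms(1)[unfolded is_pda_def, THEN conjunct2, THEN conjunct1] assms(2) by blast

lemma pda_star_count:
  assumes "is_pda K F Z S P" "k < K"
  shows "card {j. j < F \<and> P j k = None} = Z"
  using assms(1)[unfolded is_pda_def, THEN conjunct2, THEN conjunct2, THEN conjunct1] assms(2)
  by blast

lemma pda_same_symbol:
  assumes "is_pda K F Z S P" "j1 < F" "j2 < F" "k1 < K" "k2 < K"
    and "P j1 k1 = Some s" "P j2 k2 = Some s"
  shows "(j1 = j2 \<and> k1 = k2) \<or> (P j1 k2 = None \<and> P j2 k1 = None)"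
proof -
  note conds = assms(1)[unfolded is_pda_def, THEN conjunct2, THEN conjunct2, THEN conjunct2]
  have "P j1 k2 \<noteq> Some s" if "j1 = j2" "k1 \<noteq> k2"
    using conds[THEN conjunct1] assms(2-7) that by blast
  moreover have "P j2 k1 \<noteq> Some s" if "j1 \<noteq> j2" "k1 = k2"
    using conds[THEN conjunct2, THEN conjunct1] assms(2-7) that by blast
  moreover have "P j1 k2 = None \<and> P j2 k1 = None" if "j1 \<noteq> j2" "k1 \<noteq> k2"
    using conds[THEN conjunct2, THEN conjunct2] assms(2-7) that by blast
  ultimately show ?thesis using assms(6,7) by (cases "j1 = j2"; cases "k1 = k2") auto
qed

lemma card_less_not:
  "card {j. j < (n::nat) \<and> \<not> Q j} = n - card {j. j < n \<and> Q j}"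
proof -
  have "{j. j < n \<and> \<not> Q j} = {..<n} - {j. j < n \<and> Q j}" by auto
  moreover have "card ({..<n} - {j. j < n \<and> Q j}) = n - card {j. j < n \<and> Q j}"
    by (subst card_Diff_subset) auto
  ultimately show ?thesis by simp
qed

lemma pda_integer_count:
  assumes "is_pda K F Z S P" "k < K"
  shows "card {j. j < F \<and> P j k \<noteq> None} = F - Z"
  using card_less_not[of F "\<lambda>j. P j k = None"] pda_star_count[OF assms] by simp

lemma div_mod_less_mult:
  fixes j A n :: nat
  assumes "j < A * n"
  shows "j div n < A" "j mod n < n"
proof -
  show "j div n < A" using assms by (rule less_mult_imp_div_less)
  have "n \<noteq> 0" using assms by (intro notI) simp
  then show "j mod n < n" by simp
qed

lemma div_mod_inject:
  fixes j j' n :: nat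
  assumes "j div n = j' div n" "j mod n = j' mod n"
  shows "j = j'"
  using assms by (metis div_mult_mod_eq)

lemma mult_add_less_mult:
  fixes a b A n :: nat
  assumes "a < A" "b < n"
  shows "a * n + b < A * n"
proof -
  have "(a + 1) * n \<le> A * n" using assms by (intro mult_le_mono1) simp
  then show ?thesis using assms by simp
qed

lemma mult_add_inject:
  fixes x x' y y' n :: nat
  assumes "x * n + y = x' * n + y'" "y < n" "y' < n"
  shows "x = x' \<and> y = y'"
proof -
  have "(x * n + y) div n = (x' * n + y') div n" "(x * n + y) mod n = (x' * n + y') mod n"
    using assms(1) by simp_all
  then show ?thesis using assms(2,3) by simp
qed

definition pair_symbol :: "nat \<Rightarrow> nat \<Rightarrow> nat \<Rightarrow> nat" where
  "pair_symbol S2 a b = (a - 1) * S2 + b"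

lemma pair_symbol_range:
  assumes "a \<in> {1..S1}" "b \<in> {1..S2}"
  shows "pair_symbol S2 a b \<in> {1..S1 * S2}"
proof -
  have "(a - 1) * S2 + b \<le> (a - 1) * S2 + S2" using assms by simp
  also have "\<dots> = a * S2" using assms by (cases a) auto
  also have "\<dots> \<le> S1 * S2" using assms by simp
  finally show ?thesis using assms by (simp add: pair_symbol_def)
qed

lemma pair_symbol_surj:
  assumes "s \<in> {1..S1 * S2}"
  shows "\<exists>a\<in>{1..S1}. \<exists>b\<in>{1..S2}. s = pair_symbol S2 a b"
proof -
  define a where "a = (s - 1) div S2 + 1"
  define b where "b = (s - 1) mod S2 + 1"
  have "0 < S2" using assms by (cases S2) auto
  then have "b \<in> {1..S2}" by (simp add: b_def Suc_le_eq)
  moreover have "(s - 1) div S2 < S1" using assms by (intro less_mult_imp_div_less) auto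
  then have "a \<in> {1..S1}" by (simp add: a_def)
  moreover have "s = pair_symbol S2 a b"
    using assms div_mult_mod_eq[of "s - 1" S2] by (simp add: pair_symbol_def a_def b_def)
  ultimately show ?thesis by blast
qed

lemma pair_symbol_inject:
  assumes "pair_symbol S2 a b = pair_symbol S2 a' b'"
    and "1 \<le> a" "1 \<le> a'" "b \<in> {1..S2}" "b' \<in> {1..S2}"
  shows "a = a' \<and> b = b'"
proof -
  have "(a - 1) * S2 + (b - 1) = (a' - 1) * S2 + (b' - 1)"
    using assms by (simp add: pair_symbol_def)
  then have "a - 1 = a' - 1 \<and> b - 1 = b' - 1"
    using assms(4,5) by (intro mult_add_inject) auto
  then show ?thesis using assms by auto
qed

definition pda_kron :: "nat \<Rightarrow> nat \<Rightarrow> nat \<Rightarrow> (nat \<Rightarrow> nat \<Rightarrow> nat option)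
    \<Rightarrow> (nat \<Rightarrow> nat \<Rightarrow> nat option) \<Rightarrow> nat \<Rightarrow> nat \<Rightarrow> nat option" where
  "pda_kron F2 K2 S2 P1 P2 j k =
     (case (P1 (j div F2) (k div K2), P2 (j mod F2) (k mod K2)) of
        (Some a, Some b) \<Rightarrow> Some (pair_symbol S2 a b)
      | _ \<Rightarrow> None)"

lemma pda_kron_eq_Some:
  "pda_kron F2 K2 S2 P1 P2 j k = Some s \<longleftrightarrow>
     (\<exists>a b. P1 (j div F2) (k div K2) = Some a \<and> P2 (j mod F2) (k mod K2) = Some b \<and>
            s = pair_symbol S2 a b)"
  by (auto simp: pda_kron_def split: option.splits)

lemma pda_kron_eq_None:
  "pda_kron F2 K2 S2 P1 P2 j k = None \<longleftrightarrow>
     P1 (j div F2) (k div K2) = None \<or> P2 (j mod F2) (k mod K2) = None"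
  by (auto simp: pda_kron_def split: option.splits)

context
  fixes K1 F1 Z1 S1 P1 K2 F2 Z2 S2 P2
  assumes P1: "is_pda K1 F1 Z1 S1 P1" and P2: "is_pda K2 F2 Z2 S2 P2"
begin

lemma pda_kron_SomeE:
  assumes "j < F1 * F2" "k < K1 * K2" "pda_kron F2 K2 S2 P1 P2 j k = Some s"
  obtains a b where "P1 (j div F2) (k div K2) = Some a" "P2 (j mod F2) (k mod K2) = Some b"
    "s = pair_symbol S2 a b" "a \<in> {1..S1}" "b \<in> {1..S2}"
proof -
  from assms(3) obtain a b where ab: "P1 (j div F2) (k div K2) = Some a"
    "P2 (j mod F2) (k mod K2) = Some b" "s = pair_symbol S2 a b"
    by (auto simp: pda_kron_eq_Some)
  have "a \<in> {1..S1}"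
    using div_mod_less_mult(1)[OF assms(1)] div_mod_less_mult(1)[OF assms(2)]
    by (rule pda_symbol_range[OF P1 _ _ ab(1)])
  moreover have "b \<in> {1..S2}"
    using div_mod_less_mult(2)[OF assms(1)] div_mod_less_mult(2)[OF assms(2)]
    by (rule pda_symbol_range[OF P2 _ _ ab(2)])
  ultimately show thesis using that ab by blast
qed

lemma pda_kron_symbol_range:
  assumes "j < F1 * F2" "k < K1 * K2" "pda_kron F2 K2 S2 P1 P2 j k = Some s"
  shows "s \<in> {1..S1 * S2}"
  using assms by (metis pda_kron_SomeE pair_symbol_range)

lemma pda_kron_symbol_occurs:
  assumes "s \<in> {1..S1 * S2}"
  shows "\<exists>j<F1 * F2. \<exists>k<K1 * K2. pda_kron F2 K2 S2 P1 P2 j k = Some s"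
proof -
  obtain a b where ab: "a \<in> {1..S1}" "b \<in> {1..S2}" "s = pair_symbol S2 a b"
    using pair_symbol_surj[OF assms] by blast
  obtain j1 k1 where 1: "j1 < F1" "k1 < K1" "P1 j1 k1 = Some a"
    using pda_symbol_occurs[OF P1 ab(1)] by blast
  obtain j2 k2 where 2: "j2 < F2" "k2 < K2" "P2 j2 k2 = Some b"
    using pda_symbol_occurs[OF P2 ab(2)] by blast
  have "pda_kron F2 K2 S2 P1 P2 (j1 * F2 + j2) (k1 * K2 + k2) = Some s"
    using 1 2 ab(3) by (simp add: pda_kron_def)
  moreover have "j1 * F2 + j2 < F1 * F2" "k1 * K2 + k2 < K1 * K2"
    using 1 2 by (simp_all add: mult_add_less_mult)
  ultimately show ?thesis by blast
qed

lemma pda_kron_star_count: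
  assumes "k < K1 * K2"
  shows "card {j. j < F1 * F2 \<and> pda_kron F2 K2 S2 P1 P2 j k = None}
           = F1 * F2 - (F1 - Z1) * (F2 - Z2)"
proof -
  let ?A = "{a. a < F1 \<and> P1 a (k div K2) \<noteq> None}"
  let ?B = "{b. b < F2 \<and> P2 b (k mod K2) \<noteq> None}"
  let ?N = "{j. j < F1 * F2 \<and> pda_kron F2 K2 S2 P1 P2 j k \<noteq> None}"
  let ?split = "\<lambda>j. (j div F2, j mod F2)"
  have "?split ` ?N = ?A \<times> ?B"
  proof (intro equalityI subsetI)
    fix p assume "p \<in> ?split ` ?N"
    then obtain j where "j \<in> ?N" "p = ?split j" by blast
    then show "p \<in> ?A \<times> ?B"
      using div_mod_less_mult[of j F1 F2] by (auto simp: pda_kron_eq_None)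
  next
    fix p assume "p \<in> ?A \<times> ?B"
    then obtain a b where p: "p = (a, b)" "a \<in> ?A" "b \<in> ?B" by blast
    then have "a * F2 + b \<in> ?N"
      by (simp add: mult_add_less_mult pda_kron_eq_None)
    moreover have "p = ?split (a * F2 + b)" using p by simp
    ultimately show "p \<in> ?split ` ?N" by blast
  qed
  moreover have "inj_on ?split ?N"
    by (rule inj_onI) (auto intro: div_mod_inject)
  ultimately have "card ?N = card (?A \<times> ?B)"
    using card_image by fastforce
  also have "\<dots> = (F1 - Z1) * (F2 - Z2)"
    using pda_integer_count[OF P1 div_mod_less_mult(1)[OF assms]]
      pda_integer_count[OF P2 div_mod_less_mult(2)[OF assms]]
    by (simp add: card_cartesian_product)
  finally show ?thesis
    using card_less_not[of "F1 * F2" "\<lambda>j. pda_kron F2 K2 S2 P1 P2 j k \<noteq> None"] by simp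
qed

lemma pda_kron_same_symbol:
  assumes "j1 < F1 * F2" "j2 < F1 * F2" "k1 < K1 * K2" "k2 < K1 * K2"
    and "pda_kron F2 K2 S2 P1 P2 j1 k1 = Some s" "pda_kron F2 K2 S2 P1 P2 j2 k2 = Some s"
  shows "(j1 = j2 \<and> k1 = k2) \<or>
         (pda_kron F2 K2 S2 P1 P2 j1 k2 = None \<and> pda_kron F2 K2 S2 P1 P2 j2 k1 = None)"
proof -
  obtain a b where 1: "P1 (j1 div F2) (k1 div K2) = Some a" "P2 (j1 mod F2) (k1 mod K2) = Some b"
    "s = pair_symbol S2 a b" "a \<in> {1..S1}" "b \<in> {1..S2}"
    using assms(1,3,5) by (rule pda_kron_SomeE)
  obtain a' b' where 2: "P1 (j2 div F2) (k2 div K2) = Some a'" "P2 (j2 mod F2) (k2 mod K2) = Some b'"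
    "s = pair_symbol S2 a' b'" "a' \<in> {1..S1}" "b' \<in> {1..S2}"
    using assms(2,4,6) by (rule pda_kron_SomeE)
  have "a = a'" "b = b'" using pair_symbol_inject[of S2 a b a' b'] 1 2 by auto
  note div_less = div_mod_less_mult(1)[OF assms(1)] div_mod_less_mult(1)[OF assms(2)]
    div_mod_less_mult(1)[OF assms(3)] div_mod_less_mult(1)[OF assms(4)]
  note mod_less = div_mod_less_mult(2)[OF assms(1)] div_mod_less_mult(2)[OF assms(2)]
    div_mod_less_mult(2)[OF assms(3)] div_mod_less_mult(2)[OF assms(4)]
  have "(j1 div F2 = j2 div F2 \<and> k1 div K2 = k2 div K2) \<or>
        (P1 (j1 div F2) (k2 div K2) = None \<and> P1 (j2 div F2) (k1 div K2) = None)"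
    using pda_same_symbol[OF P1 div_less 1(1)] 2(1) \<open>a = a'\<close> by simp
  moreover have "(j1 mod F2 = j2 mod F2 \<and> k1 mod K2 = k2 mod K2) \<or>
        (P2 (j1 mod F2) (k2 mod K2) = None \<and> P2 (j2 mod F2) (k1 mod K2) = None)"
    using pda_same_symbol[OF P2 mod_less 1(2)] 2(2) \<open>b = b'\<close> by simp
  ultimately show ?thesis
    by (auto simp: pda_kron_eq_None intro: div_mod_inject)
qed

lemma pda_kron_is_pda:
  "is_pda (K1 * K2) (F1 * F2) (F1 * F2 - (F1 - Z1) * (F2 - Z2)) (S1 * S2)
     (pda_kron F2 K2 S2 P1 P2)"
  by (rule is_pdaI[OF pda_kron_symbol_range pda_kron_symbol_occurs pda_kron_star_count
      pda_kron_same_symbol])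

end

definition base_pda :: "nat \<Rightarrow> nat \<Rightarrow> nat option" where
  "base_pda j k = (if j < 6 \<and> k < 6 then
     [[Some 3, None,   None,   Some 4, None,   Some 7],
      [None,   Some 1, Some 3, None,   Some 7, None  ],
      [Some 1, None,   Some 5, None,   None,   None  ],
      [None,   Some 5, None,   Some 2, None,   Some 8],
      [None,   None,   None,   Some 1, Some 5, Some 6],
      [Some 2, Some 4, Some 6, None,   Some 8, None  ]] ! j ! k
   else None)"

lemma all_less_6: "(\<forall>j<(6::nat). P j) \<longleftrightarrow> P 0 \<and> P 1 \<and> P 2 \<and> P 3 \<and> P 4 \<and> P 5"
  by (simp add: All_less_Suc eval_nat_numeral conj_ac)

lemma ex_less_6: "(\<exists>j<(6::nat). P j) \<longleftrightarrow> P 0 \<or> P 1 \<or> P 2 \<or> P 3 \<or> P 4 \<or> P 5"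
  by (simp add: Ex_less_Suc eval_nat_numeral disj_ac)

lemma ball_1_8: "(\<forall>s\<in>{1..(8::nat)}. P s) \<longleftrightarrow> P 1 \<and> P 2 \<and> P 3 \<and> P 4 \<and> P 5 \<and> P 6 \<and> P 7 \<and> P 8"
proof -
  have "{1..(8::nat)} = {1, 2, 3, 4, 5, 6, 7, 8}" by auto
  then show ?thesis by simp
qed

lemma card_less_6: "card {j. j < (6::nat) \<and> Q j} = length (filter Q [0, 1, 2, 3, 4, 5])"
proof -
  have upt: "[0..<6] = [0, 1, 2, 3, 4, 5::nat]" by (simp add: upt_rec)
  have "{j. j < (6::nat) \<and> Q j} = set (filter Q [0..<6])" by auto
  then show ?thesis
    using distinct_card[OF distinct_filter[OF distinct_upt, of Q 0 6]] by (simp only: upt)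
qed

lemma base_pda_is_pda: "is_pda 6 6 3 8 base_pda"
  unfolding is_pda_def all_less_6 ex_less_6 ball_1_8 card_less_6
  by (simp add: base_pda_def)

definition diagonal_pda :: "nat \<Rightarrow> nat \<Rightarrow> nat option" where
  "diagonal_pda j k = (if j = k then Some 1 else None)"

lemma diagonal_pda_is_pda:
  assumes "0 < t"
  shows "is_pda t t (t - 1) 1 diagonal_pda"
proof (rule is_pdaI)
  fix k assume "k < t"
  moreover have "{j. j < t \<and> diagonal_pda j k = None} = {..<t} - {k}"
    by (auto simp: diagonal_pda_def)
  ultimately show "card {j. j < t \<and> diagonal_pda j k = None} = t - 1" by simp
qed (use assms in \<open>auto simp: diagonal_pda_def split: if_splits\<close>)

theorem theorem5p2:
  fixes K' F' Z' S' m :: nat and P' :: "nat \<Rightarrow> nat \<Rightarrow> nat option"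
  assumes "is_pda K' F' Z' S' P'"
    and "0 < m" and "6 dvd m"
  shows "\<exists>P. is_pda (m * K') (m * F') (m * F' - 3 * (F' - Z')) (8 * S') P"
proof -
  obtain t where m: "m = 6 * t" and "0 < t" using assms(2,3) by auto
  have "is_pda (6 * t) (6 * t) (6 * t - (6 - 3) * (t - (t - 1))) (8 * 1)
      (pda_kron t t 1 base_pda diagonal_pda)"
    by (rule pda_kron_is_pda[OF base_pda_is_pda diagonal_pda_is_pda[OF \<open>0 < t\<close>]])
  then have "is_pda m m (m - 3) 8 (pda_kron t t 1 base_pda diagonal_pda)"
    using m \<open>0 < t\<close> by (simp add: Suc_diff_le)
  from pda_kron_is_pda[OF this assms(1)]
  have "is_pda (m * K') (m * F') (m * F' - (m - (m - 3)) * (F' - Z')) (8 * S')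
      (pda_kron F' K' S' (pda_kron t t 1 base_pda diagonal_pda) P')" .
  moreover have "m - (m - 3) = 3" using m \<open>0 < t\<close> by simp
  ultimately show ?thesis by auto
qed

end
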